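(* Let $\pi$ be a probability density on $\mathbb{R}^d$ with $\pi(x)>0$ for all $x$ and $\log\pi\in C^1(\mathbb{R}^d)$. For $\lambda>0$ let $\pi^{(\lambda)}(x):=\lambda^{-1}\pi(x_1/\lambda,x_2,\dots,x_d)$. Let $\mu$ be a centred symmetric probability density on $\mathbb{R}^d$ satisfying the following condition: there exists $\lambda_0>0$ such that for all $x,y\in\mathbb{R}^d$ and all $\lambda<\lambda_0$ we have $\mu(\delta_\lambda)\ge\mu(\delta)$, where $\delta=y-x$ and $\delta_\lambda=(\lambda(y_1-x_1),y_2-x_2,\dots,y_d-x_d)$; and moreover $\sup_{\xi_1\in\mathbb{R}}\mu_1(\xi_1)<\infty$, where $\mu_1(\xi_1)=\int_{\mathbb{R}^{d-1}}\mu(\xi_1,\xi_2,\dots,\xi_d)\,d\xi_2\cdots d\xi_d$. Fix $\sigma>0$ and let $P^R_\lambda$ be the Metropolis--Hastings kernel with target $\pi^{(\lambda)}$ and random walk candidate kernel $Q^R(x,dy)=\sigma^{-d}\mu((y-x)/\sigma)\,dy$ (i.e. $y=x+\sigma\xi$, $\xi\sim\mu$). Assume $\mathrm{Gap}(P^R_1)>0$. Then $\mathrm{Gap}(P^R_\lambda)=\Theta(\lambda)$ as $\lambda\downarrow 0$.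
   Context: Metropolis--Hastings kernel with target density $\pi$ and candidate kernel $Q(x,dy)=q(x,y)dy$: $P(x,dy)=\alpha(x,y)Q(x,dy)+r(x)\delta_x(dy)$ with $\alpha(x,y)=\min\{1,\pi(y)q(y,x)/(\pi(x)q(x,y))\}$ and $r(x)=1-\int\alpha(x,y)Q(x,dy)$. For a $\pi$-reversible kernel $P$, $\mathrm{Gap}(P)=\inf_{f\in L^2_{0,1}(\pi)}\frac12\int (f(y)-f(x))^2\pi(dx)P(x,dy)$, where $L^2_{0,1}(\pi)=\{f:\mathbb{E}_\pi f=0,\ \mathrm{Var}_\pi f=1\}$. For positive functions, $F(\lambda)=\Theta(G(\lambda))$ as $\lambda\downarrow0$ means $\liminf_{\lambda\downarrow0}F/G>0$ and $\limsup_{\lambda\downarrow0}F/G<\infty$. *)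

theory Defs
  imports "HOL-Analysis.Analysis"
begin

text \<open>R^d is rendered as real^'n (d = CARD('n)); the distinguished "first" coordinate is k :: 'n.\<close>

definition coord_scale :: "real \<Rightarrow> 'n::finite \<Rightarrow> real^'n \<Rightarrow> real^'n" where
  "coord_scale l k x = (\<chi> i. if i = k then l * x $ i else x $ i)"

definition scaled_target :: "(real^'n::finite \<Rightarrow> real) \<Rightarrow> 'n \<Rightarrow> real \<Rightarrow> real^'n \<Rightarrow> real" where
  "scaled_target p k l x = p (coord_scale (1 / l) k x) / l"

definition prob_density :: "(real^'n::finite \<Rightarrow> real) \<Rightarrow> bool" where
  "prob_density f \<longleftrightarrow> f \<in> borel_measurable borel \<and> (\<forall>x. 0 \<le> f x)
     \<and> (\<integral>\<^sup>+ x. ennreal (f x) \<partial>lborel) = 1"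

definition log_C1 :: "(real^'n::finite \<Rightarrow> real) \<Rightarrow> bool" where
  "log_C1 p \<longleftrightarrow> (\<exists>D :: (real^'n) \<Rightarrow> ((real^'n) \<Rightarrow>\<^sub>L real).
      (\<forall>x. ((\<lambda>z. ln (p z)) has_derivative blinfun_apply (D x)) (at x)) \<and> continuous_on UNIV D)"

definition marginal1 :: "(real^'n::finite \<Rightarrow> real) \<Rightarrow> 'n \<Rightarrow> real \<Rightarrow> ennreal" where
  "marginal1 m k t = (\<integral>\<^sup>+ f. ennreal (m (\<chi> i. if i = k then t else f i))
                        \<partial>(PiM (UNIV - {k}) (\<lambda>_. lborel)))"

definition rw_proposal :: "(real^'n::finite \<Rightarrow> real) \<Rightarrow> real \<Rightarrow> real^'n \<Rightarrow> real^'n \<Rightarrow> real" where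
  "rw_proposal m s x y = (1 / s) ^ CARD('n) * m ((1 / s) *\<^sub>R (y - x))"

definition mh_accept :: "('a \<Rightarrow> real) \<Rightarrow> ('a \<Rightarrow> 'a \<Rightarrow> real) \<Rightarrow> 'a \<Rightarrow> 'a \<Rightarrow> real" where
  "mh_accept p q x y = min 1 (p y * q y x / (p x * q x y))"

definition mh_reject :: "(real^'n::finite \<Rightarrow> real) \<Rightarrow> (real^'n \<Rightarrow> real^'n \<Rightarrow> real) \<Rightarrow> real^'n \<Rightarrow> real" where
  "mh_reject p q x = 1 - (\<integral> y. mh_accept p q x y * q x y \<partial>lborel)"

text \<open>Integral of a nonnegative g against P(x,dy) = alpha(x,y) q(x,y) dy + r(x) delta_x(dy).\<close>
definition mh_kernel_nn_integral ::
  "(real^'n::finite \<Rightarrow> real) \<Rightarrow> (real^'n \<Rightarrow> real^'n \<Rightarrow> real) \<Rightarrow> real^'n \<Rightarrow> (real^'n \<Rightarrow> ennreal) \<Rightarrow> ennreal" where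
  "mh_kernel_nn_integral p q x g =
     (\<integral>\<^sup>+ y. ennreal (mh_accept p q x y * q x y) * g y \<partial>lborel) + ennreal (mh_reject p q x) * g x"

definition L2_01 :: "(real^'n::finite \<Rightarrow> real) \<Rightarrow> (real^'n \<Rightarrow> real) set" where
  "L2_01 p = {f. f \<in> borel_measurable borel
      \<and> integrable (density lborel (\<lambda>x. ennreal (p x))) (\<lambda>x. (f x)^2)
      \<and> integral\<^sup>L (density lborel (\<lambda>x. ennreal (p x))) f = 0
      \<and> integral\<^sup>L (density lborel (\<lambda>x. ennreal (p x)))
          (\<lambda>x. (f x - integral\<^sup>L (density lborel (\<lambda>x. ennreal (p x))) f)^2) = 1}"

definition mh_gap :: "(real^'n::finite \<Rightarrow> real) \<Rightarrow> (real^'n \<Rightarrow> real^'n \<Rightarrow> real) \<Rightarrow> ennreal" where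
  "mh_gap p q = (INF f \<in> L2_01 p. (1/2) *
      (\<integral>\<^sup>+ x. ennreal (p x) * mh_kernel_nn_integral p q x (\<lambda>y. ennreal ((f y - f x)^2)) \<partial>lborel))"

end

theory Submission
  imports Defs
begin

text \<open>
  For a symmetric proposal q the gap is the infimum over L2_01 of the Dirichlet form
  E(f) = 1/2 \<integral>\<integral> \<pi>(x) q(x,y) min(1, \<pi>(y)/\<pi>(x)) (f(y) - f(x))^2 dy dx.
  Let T scale the first coordinate by \<lambda>. Substituting x = T u, y = T v shows that E for
  \<pi>^(\<lambda>) at f is \<lambda> times the Dirichlet form for \<pi> at f \<circ> T with proposal q(T u, T v),
  which dominates q(u, v) by the monotonicity of \<mu>; since f \<mapsto> f \<circ> T maps L2_01 of
  \<pi>^(\<lambda>) onto L2_01 of \<pi>, Gap(P_\<lambda>) \<ge> \<lambda> Gap(P_1).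
  Conversely, the normalised indicator of the slab 0 < x_1 \<le> \<lambda> is the image under T of a
  fixed test function for \<pi>, so it lies in L2_01 of \<pi>^(\<lambda>). The Dirichlet form of the indicator
  of a set A is at most sup_x Q(x, A), because min(\<pi>(x), \<pi>(y)) (1_A(y) - 1_A(x))^2 is bounded by
  \<pi>(x) 1_A(y) + \<pi>(y) 1_A(x); for the slab, Q(x, A) \<le> (sup \<mu>_1) \<lambda> / \<sigma> after integrating out
  all coordinates but the first.
\<close>

section \<open>Scaling one coordinate\<close>

lemma coord_scale_nth [simp]: "coord_scale l k x $ i = (if i = k then l * x $ i else x $ i)"
  by (simp add: coord_scale_def)

lemma coord_scale_1 [simp]: "coord_scale 1 k x = x"
  by (simp add: vec_eq_iff)

lemma coord_scale_inverse [simp]: "l \<noteq> 0 \<Longrightarrow> coord_scale (1 / l) k (coord_scale l k u) = u"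
  by (simp add: vec_eq_iff)

lemma linear_coord_scale: "linear (coord_scale l k)"
  by (rule linearI) (simp_all add: vec_eq_iff algebra_simps)

lemma coord_scale_measurable [measurable]: "coord_scale l k \<in> borel_measurable borel"
  by (intro borel_measurable_continuous_onI linear_continuous_on
      linear_conv_bounded_linear[THEN iffD1] linear_coord_scale)

lemma coord_scale_eq_sum_Basis:
  fixes k :: "'n::finite"
  shows "coord_scale l k = (\<lambda>u. \<Sum>j\<in>Basis. ((if j = axis k 1 then l else 1) * (u \<bullet> j)) *\<^sub>R j)"
proof
  fix u :: "real^'n"
  have "coord_scale l k u = (\<Sum>j\<in>Basis. (coord_scale l k u \<bullet> j) *\<^sub>R j)"
    by (simp add: euclidean_representation)
  also have "\<dots> = (\<Sum>j\<in>Basis. ((if j = axis k 1 then l else 1) * (u \<bullet> j)) *\<^sub>R j)"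
  proof (rule sum.cong)
    fix j :: "real^'n" assume "j \<in> Basis"
    then obtain i where "j = axis i 1" using axis_inverse by blast
    then show "(coord_scale l k u \<bullet> j) *\<^sub>R j = ((if j = axis k 1 then l else 1) * (u \<bullet> j)) *\<^sub>R j"
      by (auto simp: inner_axis axis_eq_axis)
  qed simp
  finally show "coord_scale l k u = (\<Sum>j\<in>Basis. ((if j = axis k 1 then l else 1) * (u \<bullet> j)) *\<^sub>R j)" .
qed

lemma nn_integral_coord_scale:
  fixes F :: "real^'n::finite \<Rightarrow> ennreal"
  assumes "l \<noteq> 0" and [measurable]: "F \<in> borel_measurable borel"
  shows "(\<integral>\<^sup>+x. F x \<partial>lborel) = ennreal \<bar>l\<bar> * (\<integral>\<^sup>+u. F (coord_scale l k u) \<partial>lborel)"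
proof -
  let ?c = "\<lambda>j::real^'n. if j = axis k 1 then l else 1"
  have "(\<Prod>j\<in>Basis. \<bar>?c j\<bar>) = \<bar>l\<bar>"
    by (subst prod.cong[where h="\<lambda>j. if j = axis k 1 then \<bar>l\<bar> else 1"]) (auto simp: prod.delta)
  moreover have "(\<integral>\<^sup>+x. F x \<partial>lborel) = (\<integral>\<^sup>+x. F x \<partial>density
      (distr lborel borel (\<lambda>x. 0 + (\<Sum>j\<in>Basis. (?c j * (x \<bullet> j)) *\<^sub>R j))) (\<lambda>_. \<Prod>j\<in>Basis. \<bar>?c j\<bar>))"
    by (subst lborel_affine_euclidean[where c="?c" and t=0]) (use assms in auto)
  ultimately show ?thesis
    by (simp add: nn_integral_density nn_integral_distr nn_integral_cmult
        coord_scale_eq_sum_Basis[symmetric])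
qed

lemma scaled_target_1 [simp]: "scaled_target p k 1 = p"
  by (simp add: scaled_target_def fun_eq_iff)

lemma scaled_target_coord_scale [simp]: "l \<noteq> 0 \<Longrightarrow> scaled_target p k l (coord_scale l k u) = p u / l"
  by (simp add: scaled_target_def)

lemma scaled_target_measurable [measurable]:
  assumes [measurable]: "p \<in> borel_measurable borel"
  shows "scaled_target p k l \<in> borel_measurable borel"
  unfolding scaled_target_def by measurable

lemma density_scaled_target:
  fixes p :: "real^'n::finite \<Rightarrow> real"
  assumes [measurable]: "p \<in> borel_measurable borel" and p_nonneg: "\<forall>x. 0 \<le> p x" and l: "0 < l"
  shows "density lborel (\<lambda>x. ennreal (scaled_target p k l x))
    = distr (density lborel (\<lambda>x. ennreal (p x))) borel (coord_scale l k)"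
proof (rule measure_eqI)
  fix A :: "(real^'n) set"
  assume "A \<in> sets (density lborel (\<lambda>x. ennreal (scaled_target p k l x)))"
  then have [measurable]: "A \<in> sets borel" by simp
  have "emeasure (density lborel (\<lambda>x. ennreal (scaled_target p k l x))) A
      = ennreal l * (\<integral>\<^sup>+u. ennreal (p u / l) * indicator A (coord_scale l k u) \<partial>lborel)"
    using l by (simp add: emeasure_density, subst nn_integral_coord_scale[where l=l and k=k]) auto
  also have "\<dots> = (\<integral>\<^sup>+u. ennreal (p u) * indicator (coord_scale l k -` A) u \<partial>lborel)"
    using l p_nonneg by (subst nn_integral_cmult[symmetric])
      (auto intro!: nn_integral_cong simp: ennreal_mult'[symmetric] indicator_def)
  also have "\<dots> = emeasure (distr (density lborel (\<lambda>x. ennreal (p x))) borel (coord_scale l k)) A"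
    by (simp add: emeasure_distr emeasure_density vimage_def)
  finally show "emeasure (density lborel (\<lambda>x. ennreal (scaled_target p k l x))) A
      = emeasure (distr (density lborel (\<lambda>x. ennreal (p x))) borel (coord_scale l k)) A" .
qed simp

lemma prob_density_scaled_target:
  assumes "prob_density p" and l: "0 < l"
  shows "prob_density (scaled_target p k l)"
proof -
  have [measurable]: "p \<in> borel_measurable borel" and p_nonneg: "\<forall>x. 0 \<le> p x"
    and p_int: "(\<integral>\<^sup>+x. ennreal (p x) \<partial>lborel) = 1"
    using assms(1) by (auto simp: prob_density_def)
  have "(\<integral>\<^sup>+x. ennreal (scaled_target p k l x) \<partial>lborel)
      = emeasure (density lborel (\<lambda>x. ennreal (scaled_target p k l x))) UNIV"
    by (simp add: emeasure_density)
  also have "\<dots> = 1"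
    using p_nonneg l p_int by (simp add: density_scaled_target emeasure_distr emeasure_density)
  moreover have "0 \<le> scaled_target p k l x" for x
    using p_nonneg l by (simp add: scaled_target_def)
  ultimately show ?thesis by (simp add: prob_density_def)
qed

lemma L2_01_scaled_target_iff:
  fixes p :: "real^'n::finite \<Rightarrow> real"
  assumes [measurable]: "p \<in> borel_measurable borel" "f \<in> borel_measurable borel"
    and "\<forall>x. 0 \<le> p x" and "0 < l"
  shows "f \<in> L2_01 (scaled_target p k l) \<longleftrightarrow> f \<circ> coord_scale l k \<in> L2_01 p"
  using assms by (simp add: L2_01_def density_scaled_target integrable_distr_eq integral_distr o_def)

section \<open>The Dirichlet form\<close>

lemma rw_proposal_sym: "\<forall>x. m (- x) = m x \<Longrightarrow> rw_proposal m s x y = rw_proposal m s y x"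
  by (metis minus_diff_eq rw_proposal_def scaleR_minus_right)

lemma rw_proposal_measurable [measurable]:
  assumes [measurable]: "m \<in> borel_measurable borel"
  shows "(\<lambda>(x, y). rw_proposal m s x y) \<in> borel_measurable (borel \<Otimes>\<^sub>M borel)"
  unfolding rw_proposal_def by measurable

definition mh_dirichlet ::
  "('a::euclidean_space \<Rightarrow> real) \<Rightarrow> ('a \<Rightarrow> 'a \<Rightarrow> real) \<Rightarrow> ('a \<Rightarrow> real) \<Rightarrow> ennreal" where
  "mh_dirichlet p q f = (1/2) * (\<integral>\<^sup>+x. ennreal (p x) *
     (\<integral>\<^sup>+y. ennreal (q x y * min 1 (p y / p x)) * ennreal ((f y - f x)^2) \<partial>lborel) \<partial>lborel)"

lemma mh_accept_mult_symmetric: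
  assumes "0 < p x" "0 < p y" "q y x = q x y"
  shows "mh_accept p q x y * q x y = q x y * min 1 (p y / p x)"
proof (cases "q x y = 0")
  case False
  then have "p y * q y x / (p x * q x y) = p y / p x" using assms by (simp add: field_simps)
  then show ?thesis by (simp add: mh_accept_def mult.commute)
qed simp

text \<open>The rejection part of the kernel sits on the diagonal, where (f y - f x)^2 vanishes.\<close>

lemma mh_gap_eq_INF_mh_dirichlet:
  assumes "\<forall>x. 0 < p x" "\<forall>x y. q x y = q y x"
  shows "mh_gap p q = (INF f\<in>L2_01 p. mh_dirichlet p q f)"
  unfolding mh_gap_def mh_dirichlet_def mh_kernel_nn_integral_def
  using assms by (simp add: mh_accept_mult_symmetric)

lemma mh_dirichlet_affine:
  fixes p :: "'a::euclidean_space \<Rightarrow> real"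
  assumes [measurable]: "p \<in> borel_measurable borel" "(\<lambda>(x, y). q x y) \<in> borel_measurable (borel \<Otimes>\<^sub>M borel)"
    "f \<in> borel_measurable borel"
  shows "mh_dirichlet p q (\<lambda>x. c * (f x - a)) = ennreal (c^2) * mh_dirichlet p q f"
proof -
  let ?K = "\<lambda>x y. ennreal (q x y * min 1 (p y / p x))"
  have "(c * (f y - a) - c * (f x - a))^2 = c^2 * (f y - f x)^2" for x y
    by (simp add: power_mult_distrib[symmetric] right_diff_distrib[symmetric])
  then have "ennreal (p x) * (\<integral>\<^sup>+y. ?K x y * ennreal ((c * (f y - a) - c * (f x - a))^2) \<partial>lborel)
      = ennreal (c^2) * (ennreal (p x) * (\<integral>\<^sup>+y. ?K x y * ennreal ((f y - f x)^2) \<partial>lborel))" for x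
    by (simp add: ennreal_mult' nn_integral_cmult mult.left_commute)
  then have "(\<integral>\<^sup>+x. ennreal (p x) *
        (\<integral>\<^sup>+y. ?K x y * ennreal ((c * (f y - a) - c * (f x - a))^2) \<partial>lborel) \<partial>lborel)
      = ennreal (c^2) * (\<integral>\<^sup>+x. ennreal (p x) * (\<integral>\<^sup>+y. ?K x y * ennreal ((f y - f x)^2) \<partial>lborel) \<partial>lborel)"
    by (simp only:) (rule nn_integral_cmult, measurable)
  then show ?thesis
    unfolding mh_dirichlet_def by (simp add: mult.left_commute)
qed

lemma mh_dirichlet_mono_proposal:
  assumes "\<forall>x. 0 \<le> p x" and "\<And>x y. q x y \<le> q' x y"
  shows "mh_dirichlet p q f \<le> mh_dirichlet p q' f"
  unfolding mh_dirichlet_def using assms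
  by (intro mult_left_mono nn_integral_mono mult_right_mono ennreal_leI) simp_all

lemma mh_dirichlet_scaled_target:
  fixes p :: "real^'n::finite \<Rightarrow> real"
  assumes [measurable]: "p \<in> borel_measurable borel" "(\<lambda>(x, y). q x y) \<in> borel_measurable (borel \<Otimes>\<^sub>M borel)"
    "f \<in> borel_measurable borel"
    and p_nonneg: "\<forall>x. 0 \<le> p x" and l: "0 < l"
  shows "mh_dirichlet (scaled_target p k l) q f
    = ennreal l * mh_dirichlet p (\<lambda>u v. q (coord_scale l k u) (coord_scale l k v)) (f \<circ> coord_scale l k)"
proof -
  let ?T = "coord_scale l k"
  let ?pl = "scaled_target p k l"
  let ?G = "\<lambda>x y. ennreal (q x y * min 1 (?pl y / ?pl x)) * ennreal ((f y - f x)^2)"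
  have [measurable]: "(\<lambda>(x, y). ?G x y) \<in> borel_measurable (borel \<Otimes>\<^sub>M borel)"
    by measurable
  have "(\<integral>\<^sup>+x. ennreal (?pl x) * (\<integral>\<^sup>+y. ?G x y \<partial>lborel) \<partial>lborel)
      = ennreal l * (\<integral>\<^sup>+u. ennreal (?pl (?T u)) * (\<integral>\<^sup>+y. ?G (?T u) y \<partial>lborel) \<partial>lborel)"
    using l by (subst nn_integral_coord_scale[where l=l and k=k]) auto
  also have "\<dots> = ennreal l * (\<integral>\<^sup>+u. ennreal (p u / l) * (ennreal l * (\<integral>\<^sup>+v. ?G (?T u) (?T v) \<partial>lborel)) \<partial>lborel)"
    using l by (intro arg_cong2[where f="(*)"] refl nn_integral_cong)
      (simp, subst nn_integral_coord_scale[where l=l and k=k], auto)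
  also have "\<dots> = ennreal l * (\<integral>\<^sup>+u. ennreal (p u) * (\<integral>\<^sup>+v. ennreal (q (?T u) (?T v) * min 1 (p v / p u))
      * ennreal ((f (?T v) - f (?T u))^2) \<partial>lborel) \<partial>lborel)"
    using l p_nonneg by (simp add: mult.assoc[symmetric] ennreal_mult'[symmetric])
  finally show ?thesis
    unfolding mh_dirichlet_def o_def by (simp add: ac_simps)
qed

section \<open>Lower bound\<close>

lemma rw_proposal_le_coord_scale:
  assumes "\<And>z. m z \<le> m (coord_scale l k z)" and "0 < s"
  shows "rw_proposal m s u v \<le> rw_proposal m s (coord_scale l k u) (coord_scale l k v)"
proof -
  have "coord_scale l k ((1 / s) *\<^sub>R (v - u))
      = (1 / s) *\<^sub>R (coord_scale l k v - coord_scale l k u)"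
    by (simp add: vec_eq_iff algebra_simps)
  then show ?thesis
    using assms(1)[of "(1 / s) *\<^sub>R (v - u)"] assms(2) by (simp add: rw_proposal_def mult_left_mono)
qed

lemma mh_gap_scaled_target_ge:
  fixes p :: "real^'n::finite \<Rightarrow> real"
  assumes [measurable]: "p \<in> borel_measurable borel" "(\<lambda>(x, y). q x y) \<in> borel_measurable (borel \<Otimes>\<^sub>M borel)"
    and p_pos: "\<forall>x. 0 < p x" and q_sym: "\<forall>x y. q x y = q y x"
    and l: "0 < l" and q_le: "\<And>u v. q u v \<le> q (coord_scale l k u) (coord_scale l k v)"
  shows "ennreal l * mh_gap p q \<le> mh_gap (scaled_target p k l) q"
proof -
  have pl_pos: "\<forall>x. 0 < scaled_target p k l x"
    using p_pos l by (simp add: scaled_target_def)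
  show ?thesis
    unfolding mh_gap_eq_INF_mh_dirichlet[OF p_pos q_sym] mh_gap_eq_INF_mh_dirichlet[OF pl_pos q_sym]
  proof (intro INF_greatest)
    fix f assume f: "f \<in> L2_01 (scaled_target p k l)"
    then have [measurable]: "f \<in> borel_measurable borel" by (simp add: L2_01_def)
    have "f \<circ> coord_scale l k \<in> L2_01 p"
      using f p_pos l by (simp add: L2_01_scaled_target_iff less_imp_le)
    then have "ennreal l * (INF g\<in>L2_01 p. mh_dirichlet p q g) \<le> ennreal l * mh_dirichlet p q (f \<circ> coord_scale l k)"
      by (intro mult_left_mono INF_lower) simp_all
    also have "\<dots> \<le> ennreal l * mh_dirichlet p (\<lambda>u v. q (coord_scale l k u) (coord_scale l k v)) (f \<circ> coord_scale l k)"
      using p_pos q_le by (intro mult_left_mono mh_dirichlet_mono_proposal) (simp_all add: less_imp_le)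
    also have "\<dots> = mh_dirichlet (scaled_target p k l) q f"
      using p_pos l by (simp add: mh_dirichlet_scaled_target less_imp_le)
    finally show "ennreal l * (INF g\<in>L2_01 p. mh_dirichlet p q g) \<le> mh_dirichlet (scaled_target p k l) q f" .
  qed
qed

lemma le_divide_ennreal_if_mult_le:
  assumes "0 < l" and "ennreal l * x \<le> y"
  shows "x \<le> y / ennreal l"
proof -
  have "(x * ennreal l) / ennreal l \<le> y / ennreal l"
    using assms(2) by (intro divide_right_mono_ennreal) (simp add: mult.commute)
  then show ?thesis
    using assms(1) by (simp add: ennreal_mult_divide_eq)
qed

lemma mh_gap_rw_scaled_target_Liminf_ge:
  fixes p m :: "real^'n::finite \<Rightarrow> real" and k :: 'n
  assumes p_dens: "prob_density p" and p_pos: "\<forall>x. 0 < p x"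
    and m_dens: "prob_density m" and m_sym: "\<forall>x. m (- x) = m x" and s: "0 < s"
    and m_mono: "\<exists>l0>0. \<forall>x y l. 0 < l \<and> l < l0 \<longrightarrow> m (coord_scale l k (y - x)) \<ge> m (y - x)"
  shows "mh_gap p (rw_proposal m s)
    \<le> Liminf (at_right 0) (\<lambda>l. mh_gap (scaled_target p k l) (rw_proposal m s) / ennreal l)"
proof (rule Liminf_bounded)
  let ?q = "rw_proposal m s"
  have [measurable]: "p \<in> borel_measurable borel" "m \<in> borel_measurable borel"
    using p_dens m_dens by (simp_all add: prob_density_def)
  have q_sym: "\<forall>x y. ?q x y = ?q y x"
    using m_sym by (metis rw_proposal_sym)
  obtain l0 where "0 < l0" and mono: "\<And>l z. 0 < l \<Longrightarrow> l < l0 \<Longrightarrow> m z \<le> m (coord_scale l k z)"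
    using m_mono by (metis diff_zero)
  have "mh_gap p ?q \<le> mh_gap (scaled_target p k l) ?q / ennreal l" if "0 < l" "l < l0" for l
    using p_pos q_sym s that mono
    by (intro le_divide_ennreal_if_mult_le mh_gap_scaled_target_ge rw_proposal_le_coord_scale) simp_all
  then show "\<forall>\<^sub>F l in at_right 0. mh_gap p ?q \<le> mh_gap (scaled_target p k l) ?q / ennreal l"
    using eventually_at_right_real[OF \<open>0 < l0\<close>] by (rule eventually_mono[rotated]) auto
qed

section \<open>Lebesgue measure on real^'n as a product measure\<close>

lemma borel_measurable_vec_lambda:
  fixes g :: "'a \<Rightarrow> 'n::finite \<Rightarrow> real"
  assumes "\<And>i. (\<lambda>x. g x i) \<in> borel_measurable M"
  shows "(\<lambda>x. \<chi> i. g x i) \<in> borel_measurable M"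
proof (subst borel_measurable_euclidean_space, intro ballI)
  fix j :: "real^'n" assume "j \<in> Basis"
  then obtain i where "j = axis i 1" using axis_inverse by blast
  then show "(\<lambda>x. (\<chi> i. g x i) \<bullet> j) \<in> borel_measurable M"
    using assms by (simp add: inner_axis)
qed

lemma measurable_vec_lambda_fix_coordinate [measurable]:
  "(\<lambda>f. (\<chi> i. if i = k then t else f i) :: real^'n::finite)
    \<in> borel_measurable (PiM (UNIV - {k}) (\<lambda>_. lborel))"
proof (rule borel_measurable_vec_lambda)
  fix i
  show "(\<lambda>f. if i = k then t else f i) \<in> borel_measurable (PiM (UNIV - {k}) (\<lambda>_. lborel))"
    by (cases "i = k") (simp_all add: measurable_component_singleton)
qed

lemma lborel_eq_distr_vec_lambda:
  "(lborel :: (real^'n::finite) measure) = distr (PiM UNIV (\<lambda>_. lborel)) borel (\<lambda>f. \<chi> i. f i)"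
proof (rule lborel_eqI)
  interpret product_sigma_finite "\<lambda>_::'n. (lborel::real measure)" by standard
  fix l u :: "real^'n" assume le: "\<And>b. b \<in> Basis \<Longrightarrow> l \<bullet> b \<le> u \<bullet> b"
  have le': "l $ i \<le> u $ i" for i using le[of "axis i 1"] by (simp add: inner_axis)
  have "(\<lambda>f. \<chi> i. f i) -` box l u \<inter> space (PiM UNIV (\<lambda>_. lborel)) = PiE UNIV (\<lambda>i. {l $ i <..< u $ i})"
    by (auto simp: space_PiM box_def Basis_vec_def inner_axis PiE_def extensional_def)
  then have "emeasure (distr (PiM UNIV (\<lambda>_. lborel)) borel (\<lambda>f. \<chi> i. f i)) (box l u)
      = ennreal (\<Prod>i\<in>UNIV. u $ i - l $ i)"
    by (simp add: emeasure_distr emeasure_PiM le' prod_ennreal borel_measurable_vec_lambda)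
  also have "(\<Prod>i\<in>UNIV. u $ i - l $ i) = (\<Prod>b\<in>Basis. (u - l) \<bullet> b)"
  proof -
    have B: "(Basis :: (real^'n) set) = (\<lambda>i. axis i 1) ` UNIV"
      by (auto simp: Basis_vec_def)
    have "inj (\<lambda>i::'n. axis i (1::real))"
      by (auto simp: inj_def axis_eq_axis)
    then show ?thesis unfolding B by (subst prod.reindex) (simp_all add: inner_axis)
  qed
  finally show "emeasure (distr (PiM UNIV (\<lambda>_. lborel)) borel (\<lambda>f. \<chi> i. f i)) (box l u)
      = (\<Prod>b\<in>Basis. (u - l) \<bullet> b)" .
qed (simp add: borel_measurable_vec_lambda)

lemma nn_integral_lborel_split_coordinate:
  fixes g :: "real^'n::finite \<Rightarrow> ennreal"
  assumes [measurable]: "g \<in> borel_measurable borel"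
  shows "(\<integral>\<^sup>+z. g z \<partial>lborel)
    = (\<integral>\<^sup>+t. (\<integral>\<^sup>+f. g (\<chi> i. if i = k then t else f i) \<partial>PiM (UNIV - {k}) (\<lambda>_. lborel)) \<partial>lborel)"
proof -
  interpret product_sigma_finite "\<lambda>_::'n. (lborel::real measure)" by standard
  have U: "insert k (UNIV - {k}) = (UNIV::'n set)" by auto
  have [measurable]: "(\<lambda>f. \<chi> i. f i) \<in> borel_measurable (PiM UNIV (\<lambda>_. (lborel::real measure)))"
    by (intro borel_measurable_vec_lambda) simp
  have "(\<integral>\<^sup>+z. g z \<partial>lborel) = (\<integral>\<^sup>+f. g (\<chi> i. f i) \<partial>PiM (insert k (UNIV - {k})) (\<lambda>_. lborel))"
    unfolding U by (subst lborel_eq_distr_vec_lambda) (simp add: nn_integral_distr)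
  also have "\<dots> = (\<integral>\<^sup>+t. (\<integral>\<^sup>+f. g (\<chi> i. (f(k := t)) i) \<partial>PiM (UNIV - {k}) (\<lambda>_. lborel)) \<partial>lborel)"
    by (rule product_nn_integral_insert_rev) (auto simp: U)
  finally show ?thesis by simp
qed

section \<open>Upper bound\<close>

definition coord_slab :: "'n::finite \<Rightarrow> real \<Rightarrow> (real^'n) set" where
  "coord_slab k l = {y. 0 < y $ k \<and> y $ k \<le> l}"

lemma coord_slab_borel [measurable]: "coord_slab k l \<in> sets borel"
  unfolding coord_slab_def by measurable

lemma coord_scale_in_coord_slab_iff:
  "0 < l \<Longrightarrow> coord_scale l k u \<in> coord_slab k l \<longleftrightarrow> u \<in> coord_slab k 1"
  by (simp add: coord_slab_def zero_less_mult_iff)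

lemma rw_proposal_coord_slab_le:
  fixes m :: "real^'n::finite \<Rightarrow> real"
  assumes [measurable]: "m \<in> borel_measurable borel" and m_nonneg: "\<forall>x. 0 \<le> m x"
    and s: "0 < s" and l: "0 < l" and M: "\<And>t. marginal1 m k t \<le> M"
  shows "(\<integral>\<^sup>+y. ennreal (rw_proposal m s x y) * indicator (coord_slab k l) y \<partial>lborel) \<le> M * ennreal (l / s)"
proof -
  let ?I = "{- (x $ k) / s <.. (l - x $ k) / s}"
  have "ennreal (s ^ CARD('n)) * (ennreal (rw_proposal m s x (x + s *\<^sub>R z)) * indicator (coord_slab k l) (x + s *\<^sub>R z))
      = ennreal (m z) * indicator ?I (z $ k)" for z
    using s m_nonneg by (auto simp: rw_proposal_def coord_slab_def indicator_def field_simps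
        ennreal_mult'[symmetric] power_one_over)
  then have "(\<integral>\<^sup>+y. ennreal (rw_proposal m s x y) * indicator (coord_slab k l) y \<partial>lborel)
      = (\<integral>\<^sup>+z. ennreal (m z) * indicator ?I (z $ k) \<partial>lborel)"
    using s by (subst lborel_affine[of s x]) (simp_all add: nn_integral_density nn_integral_distr
        nn_integral_cmult[symmetric] rw_proposal_def)
  also have "\<dots> = (\<integral>\<^sup>+t. marginal1 m k t * indicator ?I t \<partial>lborel)"
    unfolding marginal1_def
    by (subst nn_integral_lborel_split_coordinate[where k=k]) (auto intro!: nn_integral_cong nn_integral_multc)
  also have "\<dots> \<le> (\<integral>\<^sup>+t. M * indicator ?I t \<partial>lborel)"
    by (rule nn_integral_mono) (simp add: M mult_right_mono)
  also have "\<dots> = M * ennreal (l / s)"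
    using s l by (simp add: nn_integral_cmult_indicator diff_divide_distrib)
  finally show ?thesis .
qed

lemma mh_dirichlet_integrand_indicator_le:
  assumes "0 < p x" "0 < p y" "0 \<le> q x y" "q y x = q x y"
  shows "ennreal (p x) * (ennreal (q x y * min 1 (p y / p x)) * ennreal ((indicator A y - indicator A x)^2))
    \<le> ennreal (p x) * (ennreal (q x y) * indicator A y) + ennreal (p y) * (ennreal (q y x) * indicator A x)"
proof -
  have "p x * min 1 (p y / p x) = min (p x) (p y)"
    using assms(1) by (simp add: min_def field_simps)
  then have "p x * (q x y * min 1 (p y / p x)) * (indicator A y - indicator A x)^2
      = q x y * (min (p x) (p y) * (indicator A y - indicator A x)^2)"
    by (simp add: algebra_simps)
  also have "\<dots> \<le> q x y * (p x * indicator A y + p y * indicator A x)"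
    using assms by (intro mult_left_mono) (auto simp: indicator_def)
  also have "\<dots> = p x * (q x y * indicator A y) + p y * (q y x * indicator A x)"
    using assms(4) by (simp add: algebra_simps)
  finally have "ennreal (p x * (q x y * min 1 (p y / p x)) * (indicator A y - indicator A x)^2)
      \<le> ennreal (p x * (q x y * indicator A y) + p y * (q y x * indicator A x))"
    by (rule ennreal_leI)
  with assms show ?thesis
    by (simp add: ennreal_mult ennreal_indicator mult.assoc)
qed

lemma mh_dirichlet_indicator_le:
  fixes p :: "'a::euclidean_space \<Rightarrow> real"
  assumes [measurable]: "p \<in> borel_measurable borel" "(\<lambda>(x, y). q x y) \<in> borel_measurable (borel \<Otimes>\<^sub>M borel)"
    "A \<in> sets borel"
    and p_pos: "\<forall>x. 0 < p x" and p_int: "(\<integral>\<^sup>+x. ennreal (p x) \<partial>lborel) = 1"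
    and q_sym: "\<forall>x y. q x y = q y x" and q_nonneg: "\<forall>x y. 0 \<le> q x y"
    and jump: "\<And>x. (\<integral>\<^sup>+y. ennreal (q x y) * indicator A y \<partial>lborel) \<le> S"
  shows "mh_dirichlet p q (indicator A) \<le> S"
proof -
  define J where "J x y = ennreal (p x) * (ennreal (q x y) * indicator A y)" for x y
  have [measurable]: "(\<lambda>(x, y). J x y) \<in> borel_measurable (borel \<Otimes>\<^sub>M borel)"
    unfolding J_def by measurable
  have pointwise: "ennreal (p x) * (ennreal (q x y * min 1 (p y / p x)) * ennreal ((indicator A y - indicator A x)^2))
      \<le> J x y + J y x" for x y
    unfolding J_def using p_pos q_sym q_nonneg by (intro mh_dirichlet_integrand_indicator_le) auto
  have J_le: "(\<integral>\<^sup>+x. (\<integral>\<^sup>+y. J x y \<partial>lborel) \<partial>lborel) \<le> S"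
  proof -
    have "(\<integral>\<^sup>+y. J x y \<partial>lborel) = ennreal (p x) * (\<integral>\<^sup>+y. ennreal (q x y) * indicator A y \<partial>lborel)" for x
      unfolding J_def by (rule nn_integral_cmult) measurable
    then have "(\<integral>\<^sup>+x. (\<integral>\<^sup>+y. J x y \<partial>lborel) \<partial>lborel) \<le> (\<integral>\<^sup>+x. ennreal (p x) * S \<partial>lborel)"
      using jump by (simp add: nn_integral_mono mult_left_mono)
    then show ?thesis by (simp add: nn_integral_multc p_int)
  qed
  have "(\<integral>\<^sup>+x. ennreal (p x) * (\<integral>\<^sup>+y. ennreal (q x y * min 1 (p y / p x))
      * ennreal ((indicator A y - indicator A x)^2) \<partial>lborel) \<partial>lborel)
      \<le> (\<integral>\<^sup>+x. (\<integral>\<^sup>+y. J x y + J y x \<partial>lborel) \<partial>lborel)"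
    (is "?D \<le> _")
    by (intro nn_integral_mono) (simp add: nn_integral_cmult[symmetric] nn_integral_mono pointwise)
  also have "\<dots> = (\<integral>\<^sup>+x. (\<integral>\<^sup>+y. J x y \<partial>lborel) \<partial>lborel) + (\<integral>\<^sup>+x. (\<integral>\<^sup>+y. J y x \<partial>lborel) \<partial>lborel)"
    by (simp add: nn_integral_add)
  also have "(\<integral>\<^sup>+x. (\<integral>\<^sup>+y. J y x \<partial>lborel) \<partial>lborel) = (\<integral>\<^sup>+x. (\<integral>\<^sup>+y. J x y \<partial>lborel) \<partial>lborel)"
    by (rule lborel_pair.Fubini') simp
  also have "\<dots> + \<dots> \<le> S + S"
    by (intro add_mono J_le)
  finally have "(1/2) * ?D \<le> (1/2) * (S + S)"
    by (rule mult_left_mono) simp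
  then show ?thesis
    unfolding mh_dirichlet_def by (simp add: mult_2[symmetric] ennreal_divide_times mult.assoc[symmetric])
qed

lemma emeasure_density_ne_0_if_box_subset:
  fixes p :: "'a::euclidean_space \<Rightarrow> real"
  assumes [measurable]: "p \<in> borel_measurable borel" "B \<in> sets borel"
    and p_pos: "\<forall>x. 0 < p x" and box: "box a b \<subseteq> B" "box a b \<noteq> {}"
  shows "emeasure (density lborel (\<lambda>x. ennreal (p x))) B \<noteq> 0"
proof
  assume "emeasure (density lborel (\<lambda>x. ennreal (p x))) B = 0"
  then have "AE x in lborel. x \<in> B \<longrightarrow> ennreal (p x) = 0"
    using null_sets_density_iff[of "\<lambda>x. ennreal (p x)" lborel B] by (simp add: null_sets_def)
  then have "AE x in lborel. x \<notin> B"
    by eventually_elim (use p_pos in \<open>auto simp: ennreal_eq_0_iff not_le[symmetric]\<close>)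
  then have "B \<in> null_sets lborel"
    by (simp add: AE_iff_null_sets)
  then have "emeasure lborel (box a b) = 0"
    using null_sets_subset[of B lborel "box a b"] box(1) by (simp add: null_setsD1)
  moreover have "0 < (\<Prod>i\<in>Basis. (b - a) \<bullet> i)"
    using box(2) by (intro prod_pos) (auto simp: box_ne_empty inner_diff_left)
  ultimately show False
    using box(2) by (auto simp: emeasure_lborel_box_eq box_ne_empty ennreal_eq_0_iff less_imp_le not_le)
qed

lemma measure_coord_slab_bounds:
  fixes p :: "real^'n::finite \<Rightarrow> real"
  assumes "prob_density p" and p_pos: "\<forall>x. 0 < p x"
  shows "0 < measure (density lborel (\<lambda>x. ennreal (p x))) (coord_slab k 1)"
    and "measure (density lborel (\<lambda>x. ennreal (p x))) (coord_slab k 1) < 1"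
proof -
  let ?P = "density lborel (\<lambda>x. ennreal (p x))"
  have [measurable]: "p \<in> borel_measurable borel"
    using assms(1) by (simp add: prob_density_def)
  have P_UNIV: "emeasure ?P UNIV = 1"
    using assms(1) by (simp add: prob_density_def emeasure_density)
  interpret P: finite_measure ?P
    using P_UNIV by (intro finite_measureI) simp
  have "emeasure ?P (coord_slab k 1) \<noteq> 0"
    by (rule emeasure_density_ne_0_if_box_subset[where a="\<chi> i. 0" and b="\<chi> i. 1"])
      (auto simp: coord_slab_def mem_box_cart interval_ne_empty_cart p_pos less_imp_le)
  then show "0 < measure ?P (coord_slab k 1)"
    by (simp add: P.emeasure_eq_measure ennreal_eq_0_iff)
  have "box (\<chi> i. if i = k then 1 else 0) (\<chi> i. 2) \<subseteq> UNIV - coord_slab k 1"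
  proof
    fix x :: "real^'n" assume "x \<in> box (\<chi> i. if i = k then 1 else 0) (\<chi> i. 2)"
    then have "(\<chi> i. if i = k then 1 else 0) $ k < x $ k"
      unfolding mem_box_cart by blast
    then show "x \<in> UNIV - coord_slab k 1" by (simp add: coord_slab_def)
  qed
  then have "emeasure ?P (UNIV - coord_slab k 1) \<noteq> 0"
    by (intro emeasure_density_ne_0_if_box_subset) (auto simp: interval_ne_empty_cart p_pos)
  then have "0 < measure ?P (UNIV - coord_slab k 1)"
    by (simp add: P.emeasure_eq_measure ennreal_eq_0_iff)
  then show "measure ?P (coord_slab k 1) < 1"
    using P.finite_measure_compl[of "coord_slab k 1"] P_UNIV by (simp add: measure_def)
qed

lemma normalized_indicator_in_L2_01:
  fixes p :: "real^'n::finite \<Rightarrow> real" and A :: "(real^'n) set"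
  defines "a \<equiv> measure (density lborel (\<lambda>x. ennreal (p x))) A"
  assumes "prob_density p" and [measurable]: "A \<in> sets borel" and a: "0 < a" "a < 1"
  shows "(\<lambda>x. (1 / sqrt (a * (1 - a))) * (indicator A x - a)) \<in> L2_01 p"
proof -
  define P where "P = density lborel (\<lambda>x. ennreal (p x))"
  define c where "c = 1 / sqrt (a * (1 - a))"
  have [measurable]: "p \<in> borel_measurable borel" and P_UNIV: "emeasure P UNIV = 1"
    using assms(2) by (simp_all add: prob_density_def P_def emeasure_density)
  have [simp]: "sets P = sets borel" "space P = UNIV" "measure P UNIV = 1" "measure P A = a"
    using P_UNIV by (simp_all add: P_def a_def measure_def)
  interpret P: finite_measure P
    using P_UNIV by (intro finite_measureI) simp
  have c2: "c^2 * (a * (1 - a)) = 1"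
    using a by (simp add: c_def power_divide)
  let ?f = "\<lambda>x. c * (indicator A x - a)"
  have mean: "integral\<^sup>L P ?f = 0"
    by (simp add: P.emeasure_eq_measure)
  have sq: "(?f x - 0)^2 = c^2 * ((1 - 2 * a) * indicator A x + a^2)" for x
    by (auto simp: indicator_def power2_eq_square algebra_simps)
  have var: "integral\<^sup>L P (\<lambda>x. (?f x - integral\<^sup>L P ?f)^2) = 1"
    unfolding mean sq using c2 by (simp add: P.emeasure_eq_measure algebra_simps power2_eq_square)
  have "(indicator A x - a)^2 \<le> (1::real)" for x
    using a by (auto simp: indicator_def power2_eq_square mult_le_one)
  then have "AE x in P. norm ((?f x)^2) \<le> c^2"
    by (simp add: power_mult_distrib mult_left_le)
  then have "integrable P (\<lambda>x. (?f x)^2)"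
    by (rule P.integrable_const_bound) (unfold P_def, measurable)
  with mean var show ?thesis
    by (simp add: L2_01_def P_def c_def)
qed

lemma mh_gap_scaled_target_le:
  fixes p m :: "real^'n::finite \<Rightarrow> real" and k :: 'n
  defines "a \<equiv> measure (density lborel (\<lambda>x. ennreal (p x))) (coord_slab k 1)"
  assumes p_dens: "prob_density p" and p_pos: "\<forall>x. 0 < p x"
    and m_dens: "prob_density m" and m_sym: "\<forall>x. m (- x) = m x"
    and s: "0 < s" and l: "0 < l" and M: "\<And>t. marginal1 m k t \<le> M"
  shows "mh_gap (scaled_target p k l) (rw_proposal m s) \<le> ennreal (1 / (a * (1 - a))) * (M * ennreal (l / s))"
proof -
  let ?pl = "scaled_target p k l"
  let ?q = "rw_proposal m s"
  have [measurable]: "p \<in> borel_measurable borel" "m \<in> borel_measurable borel"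
    and m_nonneg: "\<forall>x. 0 \<le> m x"
    using p_dens m_dens by (simp_all add: prob_density_def)
  have pl_pos: "\<forall>x. 0 < ?pl x"
    using p_pos l by (simp add: scaled_target_def)
  have pl_int: "(\<integral>\<^sup>+x. ennreal (?pl x) \<partial>lborel) = 1"
    using prob_density_scaled_target[OF p_dens l] by (simp add: prob_density_def)
  have q_sym: "\<forall>x y. ?q x y = ?q y x"
    using m_sym by (metis rw_proposal_sym)
  have q_nonneg: "\<forall>x y. 0 \<le> ?q x y"
    using m_nonneg s by (simp add: rw_proposal_def)
  have a: "0 < a" "a < 1"
    unfolding a_def using measure_coord_slab_bounds[OF p_dens p_pos] by simp_all
  define c where "c = 1 / sqrt (a * (1 - a))"
  let ?f = "\<lambda>x. c * (indicator (coord_slab k l) x - a)"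
  have "?f \<circ> coord_scale l k = (\<lambda>x. c * (indicator (coord_slab k 1) x - a))"
    using l by (simp add: fun_eq_iff indicator_def coord_scale_in_coord_slab_iff)
  then have f: "?f \<in> L2_01 ?pl"
    using normalized_indicator_in_L2_01[OF p_dens _ a[unfolded a_def]] p_pos l
    by (simp add: L2_01_scaled_target_iff c_def a_def less_imp_le)
  have "mh_gap ?pl ?q \<le> mh_dirichlet ?pl ?q ?f"
    unfolding mh_gap_eq_INF_mh_dirichlet[OF pl_pos q_sym] by (rule INF_lower[OF f])
  also have "\<dots> = ennreal (c^2) * mh_dirichlet ?pl ?q (indicator (coord_slab k l))"
    by (rule mh_dirichlet_affine) measurable
  also have "\<dots> \<le> ennreal (c^2) * (M * ennreal (l / s))"
    using pl_pos pl_int q_sym q_nonneg rw_proposal_coord_slab_le[OF _ m_nonneg s l M]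
    by (intro mult_left_mono mh_dirichlet_indicator_le) simp_all
  also have "c^2 = 1 / (a * (1 - a))"
    using a by (simp add: c_def power_divide)
  finally show ?thesis .
qed

lemma mh_gap_rw_scaled_target_Limsup_le:
  fixes p m :: "real^'n::finite \<Rightarrow> real" and k :: 'n
  defines "a \<equiv> measure (density lborel (\<lambda>x. ennreal (p x))) (coord_slab k 1)"
  assumes "prob_density p" "\<forall>x. 0 < p x" "prob_density m" "\<forall>x. m (- x) = m x" and s: "0 < s"
  shows "Limsup (at_right 0) (\<lambda>l. mh_gap (scaled_target p k l) (rw_proposal m s) / ennreal l)
    \<le> ennreal (1 / (a * (1 - a))) * ((SUP t. marginal1 m k t) * ennreal (1 / s))"
    (is "_ \<le> ?C")
proof (rule Limsup_bounded)
  have "mh_gap (scaled_target p k l) (rw_proposal m s) / ennreal l \<le> ?C" if l: "0 < l" for l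
  proof (rule divide_le_posI_ennreal)
    have "ennreal (l / s) = ennreal l * ennreal (1 / s)"
      using l s by (simp add: ennreal_mult'[symmetric])
    then have "ennreal (1 / (a * (1 - a))) * ((SUP t. marginal1 m k t) * ennreal (l / s)) = ennreal l * ?C"
      by (simp add: mult_ac)
    moreover have "mh_gap (scaled_target p k l) (rw_proposal m s)
        \<le> ennreal (1 / (a * (1 - a))) * ((SUP t. marginal1 m k t) * ennreal (l / s))"
      unfolding a_def using assms l by (intro mh_gap_scaled_target_le) (auto intro: SUP_upper)
    ultimately show "mh_gap (scaled_target p k l) (rw_proposal m s) \<le> ennreal l * ?C"
      by simp
  qed (use l in simp)
  then show "\<forall>\<^sub>F l in at_right 0. mh_gap (scaled_target p k l) (rw_proposal m s) / ennreal l \<le> ?C"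
    using eventually_at_right_less[of 0] by (rule eventually_mono[rotated]) auto
qed

theorem theorem2p1:
  fixes p m :: "real^'n::finite \<Rightarrow> real" and k :: 'n and \<sigma> :: real
  assumes p_dens: "prob_density p"
    and p_pos: "\<forall>x. p x > 0"
    and p_C1: "log_C1 p"
    and m_dens: "prob_density m"
    and m_sym: "\<forall>x. m (- x) = m x"
    and m_centred: "(\<integral> x. m x *\<^sub>R x \<partial>lborel) = 0"
    and m_mono: "\<exists>l0>0. \<forall>x y l. 0 < l \<and> l < l0 \<longrightarrow> m (coord_scale l k (y - x)) \<ge> m (y - x)"
    and m_marg: "(SUP t. marginal1 m k t) < \<infinity>"
    and sigma_pos: "\<sigma> > 0"
    and gap1: "mh_gap (scaled_target p k 1) (rw_proposal m \<sigma>) > 0"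
  shows "Liminf (at_right (0::real)) (\<lambda>l. mh_gap (scaled_target p k l) (rw_proposal m \<sigma>) / ennreal l) > 0
       \<and> Limsup (at_right (0::real)) (\<lambda>l. mh_gap (scaled_target p k l) (rw_proposal m \<sigma>) / ennreal l) < \<infinity>"
proof -
  have "0 < Liminf (at_right 0) (\<lambda>l. mh_gap (scaled_target p k l) (rw_proposal m \<sigma>) / ennreal l)"
    using mh_gap_rw_scaled_target_Liminf_ge[OF p_dens p_pos m_dens m_sym sigma_pos m_mono] gap1
    by simp
  moreover have "Limsup (at_right 0) (\<lambda>l. mh_gap (scaled_target p k l) (rw_proposal m \<sigma>) / ennreal l) < \<infinity>"
    using mh_gap_rw_scaled_target_Limsup_le[OF p_dens p_pos m_dens m_sym sigma_pos, where k=k]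
    by (rule order.strict_trans1) (use m_marg in \<open>simp add: ennreal_mult_less_top\<close>)
  ultimately show ?thesis by simp
qed

end
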